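(* Let $I_S>0$ and define the monopoly SP's net revenue as a function of the small-cell deployment density $\lambda\ge 0$ by $$S(\lambda)=\begin{cases}(BR_0)^{1-\alpha}(N_m+N_f)^{\alpha}-I_S\lambda, & 0\le\lambda\le 1,\\ (BR_0)^{1-\alpha}\big(N_m+\lambda^{\frac1\alpha-1}N_f\big)^{\alpha}-I_S\lambda, & \lambda>1.\end{cases}$$ Then every maximizer $\lambda^{\mathrm{rev}}$ of $S$ over $[0,\infty)$ satisfies either $\lambda^{\mathrm{rev}}=0$ or $\lambda^{\mathrm{rev}}=\lambda^*$, where $\lambda^*>1$ solves $$N_f(1-\alpha)(BR_0)^{1-\alpha}(\lambda^* )^{\frac1\alpha-2}\big(N_f(\lambda^* )^{\frac1\alpha-1}+N_m\big)^{\alpha-1}=I_S. \qquad (P1)$$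
   Context: Parameters: $\alpha\in(0,1)$; densities $N_m>0$ of mobile users and $N_f>0$ of fixed users; spectral efficiency $R_0>0$; SP bandwidth $B>0$; investment cost $I_S>0$ per unit small-cell density (the SP pays $I_S\lambda$ to deploy density $\lambda$). Users have utility $u(r)=\frac{r^{1-\alpha}}{1-\alpha}$. The function $S(\lambda)$ is the SP's revenue minus investment cost when, for a given density $\lambda$, it uses its revenue-optimal bandwidth split and market-clearing prices: for $\lambda\le 1$ all bandwidth goes to macro-cells; for $\lambda>1$ it allocates $B_S=\frac{\epsilon N_fB}{\epsilon N_f+N_m}$, $B_M=\frac{N_mB}{\epsilon N_f+N_m}$ with $\epsilon=\lambda^{1/\alpha-1}$. *)

theory Defs
  imports Complex_Main
begin

definition S_rev :: "real \<Rightarrow> real \<Rightarrow> real \<Rightarrow> real \<Rightarrow> real \<Rightarrow> real \<Rightarrow> real \<Rightarrow> real" where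
  "S_rev \<alpha> Nm Nf R0 B IS lam =
     (if lam \<le> 1 then (B * R0) powr (1 - \<alpha>) * (Nm + Nf) powr \<alpha> - IS * lam
      else (B * R0) powr (1 - \<alpha>) * (Nm + lam powr (1 / \<alpha> - 1) * Nf) powr \<alpha> - IS * lam)"

end

theory Submission
  imports Defs
begin

text \<open>On \<open>[0, 1]\<close> the revenue does not depend on \<open>\<lambda>\<close>, so any positive density there only
  adds investment cost and is beaten by \<open>\<lambda> = 0\<close>. Hence a nonzero maximizer lies in \<open>(1, \<infinity>)\<close>, where
  \<open>S\<close> is differentiable, and an interior maximum makes the derivative vanish; that first-order
  condition is (P1).\<close>

definition small_cell_revenue :: "real \<Rightarrow> real \<Rightarrow> real \<Rightarrow> real \<Rightarrow> real \<Rightarrow> real \<Rightarrow> real \<Rightarrow> real" where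
  "small_cell_revenue \<alpha> Nm Nf R0 B IS lam =
     (B * R0) powr (1 - \<alpha>) * (Nm + lam powr (1 / \<alpha> - 1) * Nf) powr \<alpha> - IS * lam"

lemma S_rev_eq_small_cell_revenue:
  "lam > 1 \<Longrightarrow> S_rev \<alpha> Nm Nf R0 B IS lam = small_cell_revenue \<alpha> Nm Nf R0 B IS lam"
  by (simp add: S_rev_def small_cell_revenue_def)

lemma S_rev_less_S_rev_zero:
  assumes "0 < IS" "0 < lam" "lam \<le> 1"
  shows "S_rev \<alpha> Nm Nf R0 B IS lam < S_rev \<alpha> Nm Nf R0 B IS 0"
  using assms by (simp add: S_rev_def)

lemma small_cell_revenue_has_real_derivative:
  assumes "\<alpha> \<noteq> 0" "0 < lam" "0 < Nm" "0 \<le> Nf"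
  shows "(small_cell_revenue \<alpha> Nm Nf R0 B IS has_real_derivative
     Nf * (1 - \<alpha>) * (B * R0) powr (1 - \<alpha>) * lam powr (1 / \<alpha> - 2)
       * (Nf * lam powr (1 / \<alpha> - 1) + Nm) powr (\<alpha> - 1) - IS) (at lam)"
proof -
  define p where "p = 1 / \<alpha> - 1"
  define K where "K = (B * R0) powr (1 - \<alpha>)"
  define u where "u = Nm + lam powr p * Nf"
  have u_pos: "0 < u"
    using assms by (simp add: u_def add_pos_nonneg)
  have du: "((\<lambda>y. Nm + y powr p * Nf) has_real_derivative p * lam powr (p - 1) * Nf) (at lam)"
    using assms(2) by (auto intro!: derivative_eq_intros)
  have deriv: "(small_cell_revenue \<alpha> Nm Nf R0 B IS has_real_derivative
      K * (\<alpha> * u powr (\<alpha> - 1) * (p * lam powr (p - 1) * Nf)) - IS) (at lam)"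
    unfolding small_cell_revenue_def p_def[symmetric] K_def[symmetric]
    using DERIV_fun_powr[OF du u_pos[unfolded u_def], of \<alpha>] u_pos assms(2)
    by (auto intro!: derivative_eq_intros simp: u_def)
  have "\<alpha> * p = 1 - \<alpha>"
    using assms(1) by (simp add: p_def field_simps)
  then have slope: "K * (\<alpha> * u powr (\<alpha> - 1) * (p * lam powr (p - 1) * Nf))
      = Nf * (1 - \<alpha>) * K * lam powr (p - 1) * (Nf * lam powr p + Nm) powr (\<alpha> - 1)"
    by (simp add: u_def algebra_simps flip: \<open>\<alpha> * p = 1 - \<alpha>\<close>)
  have "p - 1 = 1 / \<alpha> - 2"
    by (simp add: p_def)
  then show ?thesis
    using deriv[unfolded slope] by (simp only: p_def K_def)
qed

theorem theorem4:
  fixes \<alpha> Nm Nf R0 B IS lrev :: real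
  assumes "0 < \<alpha>" "\<alpha> < 1" "0 < Nm" "0 < Nf" "0 < R0" "0 < B" "0 < IS"
    and "0 \<le> lrev"
    and "\<forall>lam\<ge>0. S_rev \<alpha> Nm Nf R0 B IS lam \<le> S_rev \<alpha> Nm Nf R0 B IS lrev"
  shows "lrev = 0 \<or>
    (lrev > 1 \<and>
     Nf * (1 - \<alpha>) * (B * R0) powr (1 - \<alpha>) * lrev powr (1 / \<alpha> - 2)
       * (Nf * lrev powr (1 / \<alpha> - 1) + Nm) powr (\<alpha> - 1) = IS)"
proof (cases "lrev = 0")
  case False
  let ?f = "small_cell_revenue \<alpha> Nm Nf R0 B IS"
  have max: "S_rev \<alpha> Nm Nf R0 B IS lam \<le> S_rev \<alpha> Nm Nf R0 B IS lrev" if "lam \<ge> 0" for lam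
    using assms(9) that by blast
  have gt1: "lrev > 1"
  proof (rule ccontr)
    assume "\<not> lrev > 1"
    then have "S_rev \<alpha> Nm Nf R0 B IS lrev < S_rev \<alpha> Nm Nf R0 B IS 0"
      using S_rev_less_S_rev_zero assms(7,8) False by simp
    with max[of 0] show False by simp
  qed
  have "\<forall>y. \<bar>lrev - y\<bar> < lrev - 1 \<longrightarrow> ?f y \<le> ?f lrev"
    using max gt1 by (auto simp: abs_less_iff S_rev_eq_small_cell_revenue[symmetric])
  then have "Nf * (1 - \<alpha>) * (B * R0) powr (1 - \<alpha>) * lrev powr (1 / \<alpha> - 2)
       * (Nf * lrev powr (1 / \<alpha> - 1) + Nm) powr (\<alpha> - 1) - IS = 0"
    using gt1 assms(1,3,4)
    by (intro DERIV_local_max[OF small_cell_revenue_has_real_derivative]) auto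
  with gt1 show ?thesis by simp
qed simp

end
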